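(* Let $N \ge 1$ be an integer and let $0 < \delta < \frac{1}{N}$. For $\alpha > 0$, let $Q_{\vec{p}^*(\alpha)}:\mathbb{R}\to\mathbb{R}$ be the $N$-level scalar quantizer that maps each $x \in \mathbb{R}$ to the nearest point of $\{\frac{(2k-1)\alpha}{2N} : k = 1,\dots,N\}$. Equivalently, it partitions $(0,\alpha)$ into $N$ consecutive intervals of equal length $\alpha/N$ and reconstructs each cell by its midpoint; points below $0$ go to the first midpoint and points above $\alpha$ go to the last midpoint. For an $N$-level scalar quantizer $Q$ (a measurable map $\mathbb{R}\to\mathbb{R}$ whose range consists of $N$ points), define $$D(\alpha, Q) := \mathbb{E}_{X\sim \mathrm{Unif}(0,\alpha)}\big[(X-Q(X))^2\big], \qquad V(Q) := \max_{\alpha \in \{1, 1+\delta\}} D(\alpha, Q).$$ Then $$V\big(Q_{\vec{p}^*(1+\delta)}\big) < V\big(Q_{\vec{p}^*(1)}\big).$$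
   Context: $\mathrm{Unif}(0,\alpha)$ denotes the uniform distribution on $(0,\alpha)$. $D(\alpha,Q)$ is the expected squared-error distortion of quantizer $Q$ on the source $\mathrm{Unif}(0,\alpha)$. $V(Q)$ is the worst-case distortion over the two sources $\mathrm{Unif}(0,1)$ and $\mathrm{Unif}(0,1+\delta)$. *)

theory Defs
  imports "HOL-Analysis.Analysis" "HOL-Probability.Probability"
begin

definition midpt :: "nat \<Rightarrow> real \<Rightarrow> nat \<Rightarrow> real" where
  "midpt N \<alpha> k = (2 * real k - 1) * \<alpha> / (2 * real N)"

(* nearest-point quantizer Q_{p*(alpha)}; ties (a null set) go to the smaller index *)
definition Qstar :: "nat \<Rightarrow> real \<Rightarrow> real \<Rightarrow> real" where
  "Qstar N \<alpha> x = midpt N \<alpha>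
     (LEAST k. k \<in> {1..N} \<and> (\<forall>j\<in>{1..N}. \<bar>x - midpt N \<alpha> k\<bar> \<le> \<bar>x - midpt N \<alpha> j\<bar>))"

definition distortion :: "real \<Rightarrow> (real \<Rightarrow> real) \<Rightarrow> real" where
  "distortion \<alpha> Q = (\<integral>x. (x - Q x)^2 \<partial>(uniform_measure lborel {0<..<\<alpha>}))"

definition worst_distortion :: "real \<Rightarrow> (real \<Rightarrow> real) \<Rightarrow> real" where
  "worst_distortion \<delta> Q = max (distortion 1 Q) (distortion (1 + \<delta>) Q)"

end

theory Submission
  imports Defs
begin

text \<open>The quantizer \<open>Q\<^sup>*(a)\<close> has cells of width \<open>h = a/N\<close> reconstructed by their midpoints, so
  every full cell contributes \<open>h\<^sup>3/12\<close> to \<open>\<integral>(x - Q\<^sup>*(a) x)\<^sup>2\<close>, and for \<open>b \<ge> (N - 1) h\<close> the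
  distortion of \<open>Q\<^sup>*(a)\<close> on \<open>Unif(0,b)\<close> has a closed form in \<open>1/N\<close>, \<open>a\<close> and \<open>b\<close>; the hypothesis
  \<open>\<delta> < 1/N\<close> puts \<open>1\<close> into the last cell of \<open>Q\<^sup>*(1 + \<delta>)\<close>.
  Since \<open>V(Q\<^sup>*(1)) \<ge> D(1 + \<delta>, Q\<^sup>*(1))\<close>, it suffices that both \<open>D(1, Q\<^sup>*(1 + \<delta>))\<close> and
  \<open>D(1 + \<delta>, Q\<^sup>*(1 + \<delta>))\<close> are smaller than \<open>D(1 + \<delta>, Q\<^sup>*(1))\<close>, which are polynomial inequalities
  in \<open>1/N \<in> (0,1]\<close> and \<open>N\<delta> \<in> (0,1)\<close>.\<close>

lemma integral_uniform_measure_interval: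
  fixes f :: "real \<Rightarrow> real"
  assumes "a < b" and f_meas: "f \<in> borel_measurable borel"
    and f_int: "(f has_integral I) {a..b}" and f_nonneg: "\<And>x. x \<in> {a..b} \<Longrightarrow> 0 \<le> f x"
  shows "(\<integral>x. f x \<partial>uniform_measure lborel {a<..<b}) = I / (b - a)"
proof -
  let ?A = "{a<..<b}"
  have int_A: "(f has_integral I) ?A"
    using f_int has_integral_open_interval[of f I a b] by simp
  have "uniform_measure lborel ?A = density lborel (\<lambda>x. ennreal (indicator ?A x / (b - a)))"
    unfolding uniform_measure_def using \<open>a < b\<close>
    by (intro arg_cong[where f="density lborel"] ext)
       (auto simp: divide_ennreal[symmetric] indicator_def)
  then have "(\<integral>x. f x \<partial>uniform_measure lborel ?A) = (\<integral>x. (indicator ?A x / (b - a)) *\<^sub>R f x \<partial>lborel)"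
    using f_meas \<open>a < b\<close> by (simp add: integral_density)
  also have "\<dots> = set_lebesgue_integral lborel ?A f / (b - a)"
    unfolding set_lebesgue_integral_def by (simp flip: integral_divide_zero)
  also have "set_lebesgue_integral lborel ?A f = integral ?A f"
  proof (rule set_borel_integral_eq_integral(2))
    have "f absolutely_integrable_on ?A"
      using int_A f_nonneg by (intro nonnegative_absolutely_integrable_1) (auto simp: integrable_on_def)
    moreover have "(\<lambda>x. indicator ?A x *\<^sub>R f x) \<in> borel_measurable lborel"
      using f_meas by measurable
    ultimately show "set_integrable lborel ?A f"
      unfolding set_integrable_def absolutely_integrable_on_def using integrable_completion by blast
  qed
  also have "integral ?A f = I"
    using int_A by (rule integral_unique)
  finally show ?thesis .
qed

lemma Qstar_measurable: "Qstar N a \<in> borel_measurable borel"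
proof -
  have "(\<lambda>x. LEAST k. k \<in> {1..N} \<and> (\<forall>j\<in>{1..N}. \<bar>x - midpt N a k\<bar> \<le> \<bar>x - midpt N a j\<bar>))
      \<in> measurable borel (count_space UNIV)"
    by (rule measurable_Least) measurable
  then show ?thesis
    unfolding Qstar_def[abs_def] by measurable
qed

lemma Qstar_eqI:
  assumes "k \<in> {1..N}"
    and "\<And>j. j \<in> {1..N} \<Longrightarrow> j \<noteq> k \<Longrightarrow> \<bar>x - midpt N a k\<bar> < \<bar>x - midpt N a j\<bar>"
  shows "Qstar N a x = midpt N a k"
proof -
  have "(LEAST k. k \<in> {1..N} \<and> (\<forall>j\<in>{1..N}. \<bar>x - midpt N a k\<bar> \<le> \<bar>x - midpt N a j\<bar>)) = k"
    using assms by (intro Least_equality) (metis order_le_less order_refl not_le)+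
  then show ?thesis
    unfolding Qstar_def by simp
qed

lemma midpt_eq: "N \<ge> 1 \<Longrightarrow> midpt N a j = (real j - 1/2) * (a / real N)"
  unfolding midpt_def by (simp add: field_simps)

lemma Qstar_on_cell:
  assumes "N \<ge> 1" and "a > 0" and k: "k \<in> {1..N}"
    and lower: "(real k - 1) * (a / real N) < x" and upper: "k < N \<Longrightarrow> x < real k * (a / real N)"
  shows "Qstar N a x = midpt N a k"
proof (rule Qstar_eqI[OF k])
  define h where "h = a / real N"
  have "h > 0"
    using assms by (simp add: h_def)
  fix j assume j: "j \<in> {1..N}" "j \<noteq> k"
  have mid: "(midpt N a j + midpt N a k) / 2 = (real j + real k - 1) / 2 * h"
    using \<open>N \<ge> 1\<close> by (simp add: midpt_eq h_def field_simps)
  show "\<bar>x - midpt N a k\<bar> < \<bar>x - midpt N a j\<bar>"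
  proof (cases "j < k")
    case True
    then have "(real j + real k - 1) / 2 * h \<le> (real k - 1) * h"
      using \<open>h > 0\<close> by (intro mult_right_mono) auto
    then have "(midpt N a j + midpt N a k) / 2 < x"
      using lower mid by (simp add: h_def)
    moreover have "midpt N a j < midpt N a k"
      using True \<open>N \<ge> 1\<close> \<open>h > 0\<close> by (simp add: midpt_eq flip: h_def)
    ultimately show ?thesis
      by (simp add: abs_if)
  next
    case False
    with j have "k < j" "k < N"
      by auto
    then have "real k * h \<le> (real j + real k - 1) / 2 * h"
      using \<open>h > 0\<close> by (intro mult_right_mono) auto
    then have "x < (midpt N a j + midpt N a k) / 2"
      using upper[OF \<open>k < N\<close>] mid by (simp add: h_def)
    moreover have "midpt N a k < midpt N a j"
      using \<open>k < j\<close> \<open>N \<ge> 1\<close> \<open>h > 0\<close> by (simp add: midpt_eq flip: h_def)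
    ultimately show ?thesis
      by (simp add: abs_if)
  qed
qed

lemma has_integral_square_error_const:
  fixes g :: "real \<Rightarrow> real"
  assumes "lo \<le> hi" and const: "\<And>x. x \<in> {lo<..<hi} \<Longrightarrow> g x = c"
  shows "((\<lambda>x. (x - g x)^2) has_integral ((hi - c)^3 - (lo - c)^3) / 3) {lo..hi}"
proof -
  have "((\<lambda>x. (x - c)^2) has_integral ((hi - c)^3 / 3 - (lo - c)^3 / 3)) {lo..hi}"
  proof (rule fundamental_theorem_of_calculus[OF \<open>lo \<le> hi\<close>])
    fix x
    show "((\<lambda>x. (x - c)^3 / 3) has_vector_derivative (x - c)^2) (at x within {lo..hi})"
      unfolding has_real_derivative_iff_has_vector_derivative[symmetric]
      by (rule derivative_eq_intros refl | simp add: power2_eq_square)+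
  qed
  then show ?thesis
    unfolding diff_divide_distrib
    by (rule has_integral_spike_finite[where S="{lo, hi}", rotated 2]) (auto simp: const)
qed

lemma Qstar_square_error_has_integral_cells:
  assumes "N \<ge> 1" and "a > 0"
  shows "k \<le> N \<Longrightarrow>
    ((\<lambda>x. (x - Qstar N a x)^2) has_integral real k * (a / real N)^3 / 12) {0..real k * (a / real N)}"
proof (induction k)
  case 0
  show ?case
    using has_integral_refl(2)[of "\<lambda>x. (x - Qstar N a x)^2" 0] by simp
next
  case (Suc k)
  define h where "h = a / real N"
  have "h > 0"
    using assms by (simp add: h_def)
  have cell: "((\<lambda>x. (x - Qstar N a x)^2) has_integral h^3 / 12) {real k * h..real (Suc k) * h}"
  proof -
    have "real k * h \<le> real (Suc k) * h"
      using \<open>h > 0\<close> by simp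
    moreover have "Qstar N a x = midpt N a (Suc k)" if "x \<in> {real k * h<..<real (Suc k) * h}" for x
      using that Suc.prems assms by (intro Qstar_on_cell) (auto simp: h_def)
    ultimately have "((\<lambda>x. (x - Qstar N a x)^2) has_integral
        ((real (Suc k) * h - midpt N a (Suc k))^3 - (real k * h - midpt N a (Suc k))^3) / 3)
        {real k * h..real (Suc k) * h}"
      by (rule has_integral_square_error_const)
    moreover have "midpt N a (Suc k) = real (Suc k) * h - h / 2"
      using assms by (simp add: midpt_eq h_def field_simps)
    ultimately show ?thesis
      by (simp add: power3_eq_cube field_simps)
  qed
  have IH: "((\<lambda>x. (x - Qstar N a x)^2) has_integral real k * h^3 / 12) {0..real k * h}"
    using Suc by (simp add: h_def)
  have "((\<lambda>x. (x - Qstar N a x)^2) has_integral real k * h^3 / 12 + h^3 / 12) {0..real (Suc k) * h}"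
    using \<open>h > 0\<close> by (intro has_integral_combine[OF _ _ IH cell]) auto
  then show ?case
    by (simp add: h_def algebra_simps add_divide_distrib)
qed

text \<open>\<open>sq_error_integral (1/N) a b\<close> is \<open>\<integral>\<^sub>0\<^sup>b (x - Q\<^sup>*(a) x)\<^sup>2 dx\<close> once \<open>b\<close> lies beyond the
  first \<open>N - 1\<close> cells; it is written in the relative cell width \<open>w = 1/N\<close> to make the
  comparisons below polynomial.\<close>

definition sq_error_integral :: "real \<Rightarrow> real \<Rightarrow> real \<Rightarrow> real" where
  "sq_error_integral w a b = (w^2 - w^3) * a^3 / 12 + a^3 * w^3 / 24 + (b - a + a * w / 2)^3 / 3"

lemma Qstar_square_error_has_integral:
  assumes "N \<ge> 1" and "a > 0" and "(real N - 1) * (a / real N) \<le> b"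
  shows "((\<lambda>x. (x - Qstar N a x)^2) has_integral sq_error_integral (1 / real N) a b) {0..b}"
proof -
  define h where "h = a / real N"
  have "h > 0"
    using assms by (simp add: h_def)
  have "real (N - 1) = real N - 1"
    using assms by simp
  then have cells: "((\<lambda>x. (x - Qstar N a x)^2) has_integral (real N - 1) * h^3 / 12) {0..(real N - 1) * h}"
    using Qstar_square_error_has_integral_cells[OF assms(1,2), of "N - 1"] by (simp add: h_def)
  define m where "m = midpt N a N"
  have last: "((\<lambda>x. (x - Qstar N a x)^2) has_integral
      ((b - m)^3 - ((real N - 1) * h - m)^3) / 3) {(real N - 1) * h..b}"
    using assms unfolding m_def h_def
    by (intro has_integral_square_error_const) (auto intro: Qstar_on_cell)
  have "((\<lambda>x. (x - Qstar N a x)^2) has_integral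
      (real N - 1) * h^3 / 12 + ((b - m)^3 - ((real N - 1) * h - m)^3) / 3) {0..b}"
    using assms \<open>h > 0\<close> by (intro has_integral_combine[OF _ _ cells last]) (auto simp: h_def)
  moreover
  have m: "m = (real N - 1/2) * h" and a: "a = real N * h"
    using assms by (simp_all add: m_def midpt_eq h_def)
  have "sq_error_integral (1 / real N) a b
      = (real N - 1) * h^3 / 12 + ((b - m)^3 - ((real N - 1) * h - m)^3) / 3"
    using assms unfolding sq_error_integral_def m a
    by (simp add: field_simps power2_eq_square power3_eq_cube)
  ultimately show ?thesis
    by simp
qed

lemma distortion_Qstar:
  assumes "N \<ge> 1" and "a > 0" and "b > 0" and "(real N - 1) * (a / real N) \<le> b"
  shows "distortion b (Qstar N a) = sq_error_integral (1 / real N) a b / b"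
proof -
  have "(\<lambda>x. (x - Qstar N a x)^2) \<in> borel_measurable borel"
    using Qstar_measurable by measurable
  then have "(\<integral>x. (x - Qstar N a x)^2 \<partial>uniform_measure lborel {0<..<b})
      = sq_error_integral (1 / real N) a b / (b - 0)"
    using assms by (intro integral_uniform_measure_interval Qstar_square_error_has_integral) simp_all
  then show ?thesis
    unfolding distortion_def by simp
qed

lemma sq_error_integral_short_range_less:
  fixes w u :: real
  assumes "0 < w" "w \<le> 1" and "0 < u" "u < 1"
  shows "(1 + w * u) * sq_error_integral w (1 + w * u) 1 < sq_error_integral w 1 (1 + w * u)"
proof -
  define p where "p = 1/6 + 2/3 * u^2 - w * u^2 + 1/4 * w * u + 1/3 * w * u^3
    + 5/12 * w^2 * u^2 - 1/2 * w^2 * u^3 + 1/6 * w^3 * u^3"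
  have diff: "sq_error_integral w 1 (1 + w * u) - (1 + w * u) * sq_error_integral w (1 + w * u) 1
      = w^3 * u * p"
    unfolding sq_error_integral_def p_def by (simp add: field_simps power2_eq_square power3_eq_cube)
  have "w * u^2 \<le> w * u" "w * u^2 \<le> u^2" "w^2 * u^3 \<le> w^2 * u^2" "w^2 * u^2 \<le> u^2"
    using assms by (simp_all add: power2_eq_square power3_eq_cube mult_left_le mult_left_le_one_le
        mult_le_one)
  moreover have "u^2 < 1" "0 < w * u^3" "0 \<le> w^3 * u^3"
    using assms by (simp_all add: power_less_one_iff)
  ultimately have "0 < p"
    unfolding p_def by linarith
  then show ?thesis
    using diff assms by (simp add: algebra_simps)
qed

lemma sq_error_integral_full_range_less:
  fixes w d :: real
  assumes "0 < w" "w \<le> 1" and "0 < d"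
  shows "sq_error_integral w (1 + d) (1 + d) < sq_error_integral w 1 (1 + d)"
proof -
  have diff: "sq_error_integral w 1 (1 + d) - sq_error_integral w (1 + d) (1 + d)
      = d^2 * w * (1/2 - w/4) + d^3 * (1/3 - w^2/12)"
    unfolding sq_error_integral_def by (simp add: field_simps power2_eq_square power3_eq_cube)
  have "w^2 \<le> 1"
    using assms by (simp add: power_le_one)
  then have "0 < d^2 * w * (1/2 - w/4) + d^3 * (1/3 - w^2/12)"
    using assms by (intro add_pos_pos) simp_all
  then show ?thesis
    using diff by simp
qed

theorem lemma2:
  fixes N :: nat and \<delta> :: real
  assumes "N \<ge> 1" and "0 < \<delta>" and "\<delta> < 1 / real N"
  shows "worst_distortion \<delta> (Qstar N (1 + \<delta>)) < worst_distortion \<delta> (Qstar N 1)"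
proof -
  define w where "w = 1 / real N"
  have w: "0 < w" "w \<le> 1" and u: "0 < \<delta> * real N" "\<delta> * real N < 1"
    and \<delta>_eq: "\<delta> = w * (\<delta> * real N)"
    using assms by (simp_all add: w_def field_simps)
  have "(real N - 1) * \<delta> \<le> 1"
    using assms by (simp add: field_simps)
  then have one_in_last_cell: "(real N - 1) * ((1 + \<delta>) / real N) \<le> 1"
    using assms by (simp add: field_simps)
  then have in_last_cell: "(real N - 1) * ((1 + \<delta>) / real N) \<le> 1 + \<delta>"
    using assms by linarith
  have D_short: "distortion 1 (Qstar N (1 + \<delta>)) = sq_error_integral w (1 + \<delta>) 1"
    using distortion_Qstar[OF \<open>N \<ge> 1\<close> _ _ one_in_last_cell] assms by (simp add: w_def)
  have D_full: "distortion (1 + \<delta>) (Qstar N (1 + \<delta>)) = sq_error_integral w (1 + \<delta>) (1 + \<delta>) / (1 + \<delta>)"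
    using distortion_Qstar[OF \<open>N \<ge> 1\<close> _ _ in_last_cell] assms by (simp add: w_def)
  have D_mismatch: "distortion (1 + \<delta>) (Qstar N 1) = sq_error_integral w 1 (1 + \<delta>) / (1 + \<delta>)"
    using distortion_Qstar[of N 1 "1 + \<delta>"] assms by (simp add: w_def field_simps)
  have "distortion 1 (Qstar N (1 + \<delta>)) < distortion (1 + \<delta>) (Qstar N 1)"
    using sq_error_integral_short_range_less[OF w u] assms
    unfolding D_short D_mismatch \<delta>_eq[symmetric] by (simp add: field_simps)
  moreover have "distortion (1 + \<delta>) (Qstar N (1 + \<delta>)) < distortion (1 + \<delta>) (Qstar N 1)"
    using sq_error_integral_full_range_less[OF w \<open>0 < \<delta>\<close>] assms
    unfolding D_full D_mismatch by (simp add: divide_strict_right_mono)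
  ultimately show ?thesis
    unfolding worst_distortion_def by (simp add: less_max_iff_disj)
qed

end
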